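(* Let $P$ be a finite graded poset of rank $n$ with $\hat0$ and $\hat1$ admitting an $S_n$ EL-labeling $\lambda$, and let $U_1,\dots,U_{n-1}:\mathcal{M}(P)\to\mathcal{M}(P)$ be the maps defined below. Then $U_i^2=U_i$ for all $i$, $U_iU_j=U_jU_i$ whenever $|i-j|\ge2$, and $U_iU_{i+1}U_i=U_{i+1}U_iU_{i+1}$ for $i=1,\dots,n-2$. Consequently, extending the $U_i$ linearly to $\mathbb{C}\mathcal{M}(P)$ and letting $T_i$ act as $-U_i$ gives a representation of the 0-Hecke algebra $\mathcal{H}_n(0)$ on $\mathbb{C}\mathcal{M}(P)$. Moreover, if $U_i(\mathfrak m)\ne\mathfrak m$ then the label permutation of $U_i(\mathfrak m)$ is $\omega_{\mathfrak m}s_i$, which has one fewer inversion than $\omega_{\mathfrak m}$.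
   Context: Definitions: for a finite graded poset $P$ of rank $n$ with $\hat0,\hat1$, $\mathcal{M}(P)$ is its set of maximal chains and $\mathcal{E}(P)$ its set of covering pairs. An edge-labeling $\lambda:\mathcal{E}(P)\to\mathbb{Z}$ is an EL-labeling if every interval $[s,t]$ has exactly one maximal chain whose labels (read bottom to top) are weakly increasing, and its label sequence is strictly lexicographically smaller than that of every other maximal chain of $[s,t]$. It is an $S_n$ EL-labeling if moreover for every maximal chain $\mathfrak m:\hat0=x_0<\cdots<x_n=\hat1$ the sequence $\omega_{\mathfrak m}=(\lambda(x_0,x_1),\dots,\lambda(x_{n-1},x_n))$ is a permutation of $[n]$. The descent set of $\mathfrak m$ is the descent set of $\omega_{\mathfrak m}$. For $i\in[n-1]$, $U_i(\mathfrak m)$ is the unique maximal chain of $P$ that agrees with $\mathfrak m$ except possibly at its element of rank $i$ and has no descent at $i$. $s_i$ is the adjacent transposition $(i\ i+1)$; permutations compose right to left. The 0-Hecke algebra $\mathcal{H}_n(0)$ is the $\mathbb{C}$-algebra generated by $T_1,\dots,T_{n-1}$ subject to $T_i^2=-T_i$, $T_iT_j=T_jT_i$ for $|i-j|\ge2$, and $T_iT_{i+1}T_i=T_{i+1}T_iT_{i+1}$. *)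

theory Defs
  imports Complex_Main "HOL-Combinatorics.Transposition"
begin

definition poset_on :: "'a set \<Rightarrow> ('a \<Rightarrow> 'a \<Rightarrow> bool) \<Rightarrow> bool" where
  "poset_on P le \<longleftrightarrow>
     (\<forall>x\<in>P. le x x) \<and>
     (\<forall>x\<in>P. \<forall>y\<in>P. le x y \<and> le y x \<longrightarrow> x = y) \<and>
     (\<forall>x\<in>P. \<forall>y\<in>P. \<forall>z\<in>P. le x y \<and> le y z \<longrightarrow> le x z)"

definition covers :: "'a set \<Rightarrow> ('a \<Rightarrow> 'a \<Rightarrow> bool) \<Rightarrow> 'a \<Rightarrow> 'a \<Rightarrow> bool" where
  "covers P le x y \<longleftrightarrow> x \<in> P \<and> y \<in> P \<and> le x y \<and> x \<noteq> y \<and>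
     \<not> (\<exists>z\<in>P. le x z \<and> le z y \<and> z \<noteq> x \<and> z \<noteq> y)"

definition maxchains :: "'a set \<Rightarrow> ('a \<Rightarrow> 'a \<Rightarrow> bool) \<Rightarrow> 'a \<Rightarrow> 'a \<Rightarrow> 'a list set" where
  "maxchains P le s t = {c. c \<noteq> [] \<and> hd c = s \<and> last c = t \<and>
     (\<forall>k. Suc k < length c \<longrightarrow> covers P le (c ! k) (c ! Suc k))}"

definition labels :: "('a \<Rightarrow> 'a \<Rightarrow> int) \<Rightarrow> 'a list \<Rightarrow> int list" where
  "labels lam c = map (\<lambda>k. lam (c ! k) (c ! Suc k)) [0..<length c - 1]"

definition bounded_graded_poset ::
  "'a set \<Rightarrow> ('a \<Rightarrow> 'a \<Rightarrow> bool) \<Rightarrow> 'a \<Rightarrow> 'a \<Rightarrow> nat \<Rightarrow> bool" where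
  "bounded_graded_poset P le zero one n \<longleftrightarrow>
     finite P \<and> poset_on P le \<and> zero \<in> P \<and> one \<in> P \<and>
     (\<forall>x\<in>P. le zero x \<and> le x one) \<and>
     (\<forall>c\<in>maxchains P le zero one. length c = Suc n)"

definition EL_labeling :: "'a set \<Rightarrow> ('a \<Rightarrow> 'a \<Rightarrow> bool) \<Rightarrow> ('a \<Rightarrow> 'a \<Rightarrow> int) \<Rightarrow> bool" where
  "EL_labeling P le lam \<longleftrightarrow>
     (\<forall>s\<in>P. \<forall>t\<in>P. le s t \<longrightarrow>
        (\<exists>!c. c \<in> maxchains P le s t \<and> sorted (labels lam c)) \<and>
        (\<forall>c\<in>maxchains P le s t. sorted (labels lam c) \<longrightarrow>
           (\<forall>c'\<in>maxchains P le s t. c' \<noteq> c \<longrightarrow>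
              (labels lam c, labels lam c') \<in> lexord {(a, b). a < b})))"

definition Sn_EL_labeling ::
  "'a set \<Rightarrow> ('a \<Rightarrow> 'a \<Rightarrow> bool) \<Rightarrow> 'a \<Rightarrow> 'a \<Rightarrow> nat \<Rightarrow> ('a \<Rightarrow> 'a \<Rightarrow> int) \<Rightarrow> bool" where
  "Sn_EL_labeling P le zero one n lam \<longleftrightarrow>
     EL_labeling P le lam \<and>
     (\<forall>c\<in>maxchains P le zero one.
        distinct (labels lam c) \<and> set (labels lam c) = {1..int n})"

definition omega :: "('a \<Rightarrow> 'a \<Rightarrow> int) \<Rightarrow> nat \<Rightarrow> 'a list \<Rightarrow> nat \<Rightarrow> nat" where
  "omega lam n c k = (if 1 \<le> k \<and> k \<le> n then nat (labels lam c ! (k - 1)) else k)"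

text \<open>Descent of a chain at position i (1-based): omega(i) > omega(i+1).\<close>
definition has_descent :: "('a \<Rightarrow> 'a \<Rightarrow> int) \<Rightarrow> 'a list \<Rightarrow> nat \<Rightarrow> bool" where
  "has_descent lam c i \<longleftrightarrow> labels lam c ! (i - 1) > labels lam c ! i"

definition U_op ::
  "'a set \<Rightarrow> ('a \<Rightarrow> 'a \<Rightarrow> bool) \<Rightarrow> 'a \<Rightarrow> 'a \<Rightarrow> ('a \<Rightarrow> 'a \<Rightarrow> int) \<Rightarrow> nat \<Rightarrow> 'a list \<Rightarrow> 'a list" where
  "U_op P le zero one lam i m = (THE m'. m' \<in> maxchains P le zero one \<and>
      length m' = length m \<and> (\<forall>j. j \<noteq> i \<longrightarrow> m' ! j = m ! j) \<and>
      \<not> has_descent lam m' i)"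

definition inversions :: "nat \<Rightarrow> (nat \<Rightarrow> nat) \<Rightarrow> nat" where
  "inversions n \<sigma> = card {(a, b). 1 \<le> a \<and> a < b \<and> b \<le> n \<and> \<sigma> a > \<sigma> b}"

text \<open>Linear extension of U_i to the vector space C M(P), whose elements are
  represented as complex-valued functions on chains vanishing outside M(P).\<close>
definition U_lin ::
  "'a set \<Rightarrow> ('a \<Rightarrow> 'a \<Rightarrow> bool) \<Rightarrow> 'a \<Rightarrow> 'a \<Rightarrow> ('a \<Rightarrow> 'a \<Rightarrow> int) \<Rightarrow> nat
    \<Rightarrow> ('a list \<Rightarrow> complex) \<Rightarrow> ('a list \<Rightarrow> complex)" where
  "U_lin P le zero one lam i v = (\<lambda>m'. if m' \<in> maxchains P le zero one then
      (\<Sum>m\<in>{m \<in> maxchains P le zero one. U_op P le zero one lam i m = m'}. v m) else 0)"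

definition T_act ::
  "'a set \<Rightarrow> ('a \<Rightarrow> 'a \<Rightarrow> bool) \<Rightarrow> 'a \<Rightarrow> 'a \<Rightarrow> ('a \<Rightarrow> 'a \<Rightarrow> int) \<Rightarrow> nat
    \<Rightarrow> ('a list \<Rightarrow> complex) \<Rightarrow> ('a list \<Rightarrow> complex)" where
  "T_act P le zero one lam i v = - U_lin P le zero one lam i v"

end

theory Submission
  imports Defs
begin

text \<open>
  \<open>U\<^sub>i m\<close> differs from \<open>m\<close> at most in the element of rank \<open>i\<close>, which it takes from the
  unique increasing maximal chain of the rank-two interval between the neighbours of that
  element. Since all label sequences are permutations of \<open>[n]\<close>, the two labels of \<open>U\<^sub>i m\<close> at ranks \<open>i, i+1\<close> are
  those of \<open>m\<close> in increasing order: either \<open>U\<^sub>i m = m\<close>, or a descent of \<open>\<omega>\<^sub>m\<close> is turned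
  into an ascent and \<open>\<omega>\<^bsub>U\<^sub>i m\<^esub> = \<omega>\<^sub>m s\<^sub>i\<close> has one inversion less.

  The relations all come from the uniqueness of increasing chains: two maximal chains that
  agree outside an interval \<open>[m\<^sub>a, m\<^sub>b]\<close> and have increasing labels inside it coincide. For
  the braid relation, both sides agree outside ranks \<open>i, i+1\<close>, and following the minima
  and maxima of the labels shows that both are increasing from rank \<open>i-1\<close> to \<open>i+2\<close>.
  Linearly extended, composition of the \<open>U\<^sub>i\<close> becomes composition of push-forwards, which
  gives the relations for \<open>T\<^sub>i = -U\<^sub>i\<close>.
\<close>

lemma maxchains_iff_successively:
  "c \<in> maxchains P le s t \<longleftrightarrow> c \<noteq> [] \<and> hd c = s \<and> last c = t \<and> successively (covers P le) c"
  by (simp add: maxchains_def successively_conv_nth)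

lemma length_labels [simp]: "length (labels lam c) = length c - 1"
  by (simp add: labels_def)

lemma nth_labels: "k < length c - 1 \<Longrightarrow> labels lam c ! k = lam (c ! k) (c ! Suc k)"
  by (simp add: labels_def)

lemma nth_labels_cong:
  assumes "k < length c - 1" "length c' = length c" "c' ! k = c ! k" "c' ! Suc k = c ! Suc k"
  shows "labels lam c' ! k = labels lam c ! k"
  using assms by (simp add: nth_labels)

lemma nth_labels_segment:
  assumes "a + k < b" "b < length c"
  shows "labels lam (take (Suc b - a) (drop a c)) ! k = labels lam c ! (a + k)"
  using assms by (simp add: nth_labels)

definition replace_segment :: "'b list \<Rightarrow> nat \<Rightarrow> nat \<Rightarrow> 'b list \<Rightarrow> 'b list" where
  "replace_segment c a b d = take a c @ d @ drop (Suc b) c"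

lemma nth_replace_segment:
  assumes "length d = Suc b - a" "a \<le> b" "b < length c"
  shows "replace_segment c a b d ! j = (if a \<le> j \<and> j \<le> b then d ! (j - a) else c ! j)"
  unfolding replace_segment_def using assms by (auto simp: nth_append min_def)

lemma ascent_if_no_descent:
  assumes "\<not> has_descent lam c i" "1 \<le> i" "i - 1 \<le> k" "Suc k < i + 1"
  shows "labels lam c ! k \<le> labels lam c ! Suc k"
proof -
  have "k = i - 1" "Suc k = i"
    using assms(2-4) by auto
  then show ?thesis
    using assms(1) by (simp add: has_descent_def)
qed

lemma inversions_comp_transpose:
  assumes i: "1 \<le> i" "i + 1 \<le> n" and descent: "\<sigma> (i + 1) < \<sigma> i"
  shows "inversions n (\<sigma> \<circ> transpose i (i + 1)) + 1 = inversions n \<sigma>"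
proof -
  let ?t = "transpose i (i + 1)"
  define I where "I \<tau> = {(a, b). 1 \<le> a \<and> a < b \<and> b \<le> n \<and> \<tau> a > \<tau> b}" for \<tau> :: "nat \<Rightarrow> nat"
  have finite: "finite (I \<tau>)" for \<tau>
    by (rule finite_subset[of _ "{1..n} \<times> {1..n}"]) (auto simp: I_def)
  have mem: "(?t a, ?t b) \<in> I (\<sigma> \<circ> ?t) \<longleftrightarrow> (a, b) \<in> I \<sigma> - {(i, i + 1)}" for a b
  proof (cases "{a, b} = {i, i + 1}")
    case True
    then show ?thesis
      using descent by (auto simp: I_def doubleton_eq_iff)
  next
    case False
    then have "?t a < ?t b \<longleftrightarrow> a < b"
      by (auto simp: transpose_def doubleton_eq_iff)
    moreover have "1 \<le> ?t a \<longleftrightarrow> 1 \<le> a" "?t b \<le> n \<longleftrightarrow> b \<le> n"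
      using i by (auto simp: transpose_def)
    ultimately show ?thesis
      using False by (auto simp: I_def)
  qed
  have involution: "map_prod ?t ?t (map_prod ?t ?t p) = p" for p
    by (cases p) simp
  have "map_prod ?t ?t ` I (\<sigma> \<circ> ?t) = I \<sigma> - {(i, i + 1)}"
  proof (intro set_eqI iffI)
    fix p assume "p \<in> map_prod ?t ?t ` I (\<sigma> \<circ> ?t)"
    then have "map_prod ?t ?t p \<in> I (\<sigma> \<circ> ?t)"
      using involution by auto
    then show "p \<in> I \<sigma> - {(i, i + 1)}"
      using mem by (cases p) simp
  next
    fix p assume "p \<in> I \<sigma> - {(i, i + 1)}"
    then have "map_prod ?t ?t p \<in> I (\<sigma> \<circ> ?t)"
      using mem by (cases p) simp
    then show "p \<in> map_prod ?t ?t ` I (\<sigma> \<circ> ?t)"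
      using involution by (metis image_eqI)
  qed
  moreover have "inj (map_prod ?t ?t)"
    by (metis involution injI)
  moreover have "(i, i + 1) \<in> I \<sigma>"
    using i descent by (simp add: I_def)
  ultimately have "card (I (\<sigma> \<circ> ?t)) + 1 = card (I \<sigma>)"
    using finite by (metis card_Suc_Diff1 card_image inj_on_subset subset_UNIV Suc_eq_plus1)
  then show ?thesis
    by (simp add: inversions_def I_def)
qed

lemma adjacent_rearrangement_min_max:
  fixes w w' :: "'b::linorder list"
  assumes "length w' = length w" "distinct w" "distinct w'" "set w' = set w"
    and p: "Suc p < length w"
    and agree: "\<And>k. k < length w \<Longrightarrow> k \<noteq> p \<Longrightarrow> k \<noteq> Suc p \<Longrightarrow> w' ! k = w ! k"
    and ascent: "w' ! p \<le> w' ! Suc p"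
  shows "w' ! p = min (w ! p) (w ! Suc p)" "w' ! Suc p = max (w ! p) (w ! Suc p)"
proof -
  have from_pair: "w' ! q \<in> {w ! p, w ! Suc p}" if q: "q = p \<or> q = Suc p" for q
  proof -
    obtain k where k: "k < length w" "w ! k = w' ! q"
      using q p assms(1,4) by (metis Suc_lessD in_set_conv_nth nth_mem)
    have "k = p \<or> k = Suc p"
    proof (rule ccontr)
      assume "\<not> (k = p \<or> k = Suc p)"
      then have "w' ! k = w' ! q"
        using agree k by simp
      moreover have "q < length w'"
        using assms(1) q p by auto
      ultimately have "k = q"
        using nth_eq_iff_index_eq[OF assms(3)] assms(1) k(1) by simp
      with q \<open>\<not> (k = p \<or> k = Suc p)\<close> show False
        by simp
    qed
    then show ?thesis
      using k by auto
  qed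
  have "w' ! p \<noteq> w' ! Suc p" "w ! p \<noteq> w ! Suc p"
    using assms(1-3) p by (simp_all add: nth_eq_iff_index_eq)
  then show "w' ! p = min (w ! p) (w ! Suc p)" "w' ! Suc p = max (w ! p) (w ! Suc p)"
    using from_pair[of p] from_pair[of "Suc p"] ascent by auto
qed

definition pushforward :: "'b set \<Rightarrow> ('b \<Rightarrow> 'b) \<Rightarrow> ('b \<Rightarrow> 'c::comm_monoid_add) \<Rightarrow> 'b \<Rightarrow> 'c" where
  "pushforward S f v = (\<lambda>y. if y \<in> S then sum v {x \<in> S. f x = y} else 0)"

lemma pushforward_comp:
  assumes "finite S" and g: "\<And>x. x \<in> S \<Longrightarrow> g x \<in> S"
  shows "pushforward S f (pushforward S g v) = pushforward S (f \<circ> g) v"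
proof
  fix y
  show "pushforward S f (pushforward S g v) y = pushforward S (f \<circ> g) v y"
  proof (cases "y \<in> S")
    case True
    have "pushforward S f (pushforward S g v) y = (\<Sum>z\<in>{z \<in> S. f z = y}. sum v {x \<in> S. g x = z})"
      using True by (simp add: pushforward_def)
    also have "\<dots> = (\<Sum>z\<in>{z \<in> S. f z = y}. sum v {x. x \<in> {x \<in> S. f (g x) = y} \<and> g x = z})"
      by (intro sum.cong arg_cong[where f = "sum v"]) auto
    also have "\<dots> = sum v {x \<in> S. f (g x) = y}"
      by (rule sum.group) (use assms in auto)
    finally show ?thesis
      using True by (simp add: pushforward_def)
  qed (simp add: pushforward_def)
qed

lemma pushforward_uminus: "pushforward S f (- v) = - pushforward S f (v :: _ \<Rightarrow> 'c::ab_group_add)"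
  by (auto simp: pushforward_def sum_negf)

lemma pushforward_cong: "(\<And>x. x \<in> S \<Longrightarrow> f x = g x) \<Longrightarrow> pushforward S f v = pushforward S g v"
  unfolding pushforward_def by (intro ext) (auto intro!: arg_cong[where f = "sum v"])

lemma U_lin_eq_pushforward:
  "U_lin P le zero one lam i = pushforward (maxchains P le zero one) (U_op P le zero one lam i)"
  by (intro ext) (simp add: U_lin_def pushforward_def)

locale Sn_EL_poset =
  fixes P :: "'a set" and le :: "'a \<Rightarrow> 'a \<Rightarrow> bool" and zero one :: 'a
    and n :: nat and lam :: "'a \<Rightarrow> 'a \<Rightarrow> int"
  assumes graded: "bounded_graded_poset P le zero one n"
    and Sn_EL: "Sn_EL_labeling P le zero one n lam"
begin

abbreviation M :: "'a list set" where
  "M \<equiv> maxchains P le zero one"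

abbreviation U :: "nat \<Rightarrow> 'a list \<Rightarrow> 'a list" where
  "U \<equiv> U_op P le zero one lam"

lemma finite_P: "finite P"
  and poset: "poset_on P le"
  and one_in_P: "one \<in> P"
  and length_maxchain: "c \<in> M \<Longrightarrow> length c = Suc n"
  using graded by (auto simp: bounded_graded_poset_def)

lemma labels_permutation: "c \<in> M \<Longrightarrow> distinct (labels lam c) \<and> set (labels lam c) = {1..int n}"
  using Sn_EL by (simp add: Sn_EL_labeling_def)

lemma increasing_maxchain_unique:
  "s \<in> P \<Longrightarrow> t \<in> P \<Longrightarrow> le s t \<Longrightarrow> \<exists>!c. c \<in> maxchains P le s t \<and> sorted (labels lam c)"
  using Sn_EL by (simp add: Sn_EL_labeling_def EL_labeling_def)

lemma maxchain_nth:
  assumes "c \<in> M"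
  shows maxchain_nth_0: "c ! 0 = zero"
    and maxchain_nth_n: "c ! n = one"
    and maxchain_covers: "k < n \<Longrightarrow> covers P le (c ! k) (c ! Suc k)"
  using assms length_maxchain[OF assms] by (auto simp: maxchains_def hd_conv_nth last_conv_nth)

lemma maxchain_in_P: "c \<in> M \<Longrightarrow> k \<le> n \<Longrightarrow> c ! k \<in> P"
  using maxchain_covers[of c k] maxchain_nth_n[of c] one_in_P
  by (cases "k < n") (auto simp: covers_def)

lemma maxchain_le:
  assumes c: "c \<in> M" and "a \<le> b" "b \<le> n"
  shows "le (c ! a) (c ! b)"
  using assms(2,3)
proof (induction b rule: dec_induct)
  case base
  then show ?case
    using poset maxchain_in_P[OF c] by (simp add: poset_on_def)
next
  case (step k)
  then have "le (c ! a) (c ! k)" "le (c ! k) (c ! Suc k)"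
    using maxchain_covers[OF c, of k] by (auto simp: covers_def)
  moreover have "c ! a \<in> P" "c ! k \<in> P" "c ! Suc k \<in> P"
    using maxchain_in_P[OF c] step by auto
  ultimately show ?case
    using poset unfolding poset_on_def by blast
qed

lemma maxchain_segment:
  assumes c: "c \<in> M" and ab: "a \<le> b" "b \<le> n"
  shows "take (Suc b - a) (drop a c) \<in> maxchains P le (c ! a) (c ! b)"
proof -
  let ?d = "take (Suc b - a) (drop a c)"
  have length: "length ?d = Suc b - a"
    using length_maxchain[OF c] ab by simp
  have nth: "?d ! k = c ! (a + k)" if "k < Suc b - a" for k
    using that length_maxchain[OF c] ab by simp
  show ?thesis
    unfolding maxchains_def
  proof (intro CollectI conjI allI impI)
    show "?d \<noteq> []"
      using length ab by auto
    then show "hd ?d = c ! a" "last ?d = c ! b"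
      using length nth[of 0] nth[of "b - a"] ab by (simp_all add: hd_conv_nth last_conv_nth)
    fix k assume "Suc k < length ?d"
    then have "Suc k < Suc b - a" "a + k < n"
      using length ab by auto
    then show "covers P le (?d ! k) (?d ! Suc k)"
      using nth[of k] nth[of "Suc k"] maxchain_covers[OF c, of "a + k"] by simp
  qed
qed

lemma maxchain_replace_segment:
  assumes c: "c \<in> M" and ab: "a \<le> b" "b \<le> n" and d: "d \<in> maxchains P le (c ! a) (c ! b)"
  shows "replace_segment c a b d \<in> M"
proof -
  have length: "length c = Suc n"
    using length_maxchain[OF c] .
  have c_succ: "successively (covers P le) c" and "c \<noteq> []" "hd c = zero" "last c = one"
    using c by (auto simp: maxchains_iff_successively)
  have d_succ: "successively (covers P le) d" and "d \<noteq> []" "hd d = c ! a" "last d = c ! b"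
    using d by (auto simp: maxchains_iff_successively)
  have "successively (covers P le) (take a c)" "successively (covers P le) (drop (Suc b) c)"
    using c_succ successively_append_iff[of _ "take a c" "drop a c"]
      successively_append_iff[of _ "take (Suc b) c" "drop (Suc b) c"] by auto
  moreover have "covers P le (last d) (hd (drop (Suc b) c))" if "drop (Suc b) c \<noteq> []"
    using that \<open>last d = c ! b\<close> maxchain_covers[OF c, of b] length by (simp add: hd_drop_conv_nth)
  moreover have "covers P le (last (take a c)) (hd d)" if "take a c \<noteq> []"
    using that \<open>hd d = c ! a\<close> maxchain_covers[OF c, of "a - 1"] length ab
    by (auto simp: last_conv_nth min_def)
  ultimately have "successively (covers P le) (take a c @ d @ drop (Suc b) c)"
    using d_succ \<open>d \<noteq> []\<close> by (auto simp: successively_append_iff)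
  moreover have "hd (take a c @ d @ drop (Suc b) c) = zero"
    using \<open>hd d = c ! a\<close> \<open>d \<noteq> []\<close> \<open>c \<noteq> []\<close> \<open>hd c = zero\<close> maxchain_nth_0[OF c] by (cases "a = 0") auto
  moreover have "last (take a c @ d @ drop (Suc b) c) = one"
    using \<open>last d = c ! b\<close> \<open>d \<noteq> []\<close> \<open>last c = one\<close> maxchain_nth_n[OF c] length ab
    by (cases "b = n") auto
  ultimately show ?thesis
    using \<open>d \<noteq> []\<close> by (simp add: maxchains_iff_successively replace_segment_def)
qed

lemma length_interval_maxchain:
  assumes "c \<in> M" "a \<le> b" "b \<le> n" "d \<in> maxchains P le (c ! a) (c ! b)"
  shows "length d = Suc b - a"
  using length_maxchain[OF maxchain_replace_segment[OF assms]] length_maxchain[OF assms(1)] assms(2,3)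
  by (simp add: replace_segment_def)

lemma finite_maxchains: "finite M"
proof (rule finite_subset)
  show "M \<subseteq> {c. set c \<subseteq> P \<and> length c = Suc n}"
    using maxchain_in_P length_maxchain by (fastforce simp: in_set_conv_nth)
  show "finite {c. set c \<subseteq> P \<and> length c = Suc n}"
    using finite_lists_length_eq[OF finite_P] .
qed

lemma maxchains_agree_between:
  assumes m1: "m1 \<in> M" and m2: "m2 \<in> M" and ab: "a \<le> b" "b \<le> n"
    and ends: "m1 ! a = m2 ! a" "m1 ! b = m2 ! b"
    and asc1: "\<And>k. a \<le> k \<Longrightarrow> Suc k < b \<Longrightarrow> labels lam m1 ! k \<le> labels lam m1 ! Suc k"
    and asc2: "\<And>k. a \<le> k \<Longrightarrow> Suc k < b \<Longrightarrow> labels lam m2 ! k \<le> labels lam m2 ! Suc k"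
    and j: "a \<le> j" "j \<le> b"
  shows "m1 ! j = m2 ! j"
proof -
  let ?seg = "\<lambda>m. take (Suc b - a) (drop a m)"
  have increasing_segment: "?seg m \<in> maxchains P le (m1 ! a) (m1 ! b) \<and> sorted (labels lam (?seg m))"
    if m: "m \<in> M" and "m ! a = m1 ! a" "m ! b = m1 ! b"
      and asc: "\<And>k. a \<le> k \<Longrightarrow> Suc k < b \<Longrightarrow> labels lam m ! k \<le> labels lam m ! Suc k" for m
  proof
    show "?seg m \<in> maxchains P le (m1 ! a) (m1 ! b)"
      using maxchain_segment[OF m ab] that(2,3) by simp
    have "b < length m"
      using length_maxchain[OF m] ab by simp
    then show "sorted (labels lam (?seg m))"
      unfolding sorted_iff_nth_Suc using asc ab by (simp add: nth_labels_segment)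
  qed
  have "?seg m1 \<in> maxchains P le (m1 ! a) (m1 ! b) \<and> sorted (labels lam (?seg m1))"
    by (rule increasing_segment) (use m1 asc1 in auto)
  moreover have "?seg m2 \<in> maxchains P le (m1 ! a) (m1 ! b) \<and> sorted (labels lam (?seg m2))"
    by (rule increasing_segment) (use m2 ends asc2 in auto)
  moreover have "\<exists>!c. c \<in> maxchains P le (m1 ! a) (m1 ! b) \<and> sorted (labels lam c)"
    using increasing_maxchain_unique maxchain_in_P[OF m1] maxchain_le[OF m1 ab] ab by simp
  ultimately have "?seg m1 = ?seg m2"
    by blast
  then have "?seg m1 ! (j - a) = ?seg m2 ! (j - a)"
    by simp
  then show ?thesis
    using j ab length_maxchain[OF m1] length_maxchain[OF m2] by simp
qed

lemma maxchains_eqI: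
  assumes m1: "m1 \<in> M" and m2: "m2 \<in> M" and ab: "a \<le> b" "b \<le> n"
    and outside: "\<And>j. j \<le> a \<or> b \<le> j \<Longrightarrow> m1 ! j = m2 ! j"
    and asc1: "\<And>k. a \<le> k \<Longrightarrow> Suc k < b \<Longrightarrow> labels lam m1 ! k \<le> labels lam m1 ! Suc k"
    and asc2: "\<And>k. a \<le> k \<Longrightarrow> Suc k < b \<Longrightarrow> labels lam m2 ! k \<le> labels lam m2 ! Suc k"
  shows "m1 = m2"
proof (rule nth_equalityI)
  show "length m1 = length m2"
    using length_maxchain[OF m1] length_maxchain[OF m2] by simp
  fix j
  show "m1 ! j = m2 ! j"
    using maxchains_agree_between[OF m1 m2 ab outside outside asc1 asc2, of j] outside[of j] by linarith
qed

lemma ex_maxchain_without_descent: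
  assumes m: "m \<in> M" and i: "1 \<le> i" "i < n"
  obtains m' where "m' \<in> M" "\<And>j. j \<noteq> i \<Longrightarrow> m' ! j = m ! j" "\<not> has_descent lam m' i"
proof -
  have window: "i - 1 \<le> i + 1" "i + 1 \<le> n" "i + 1 < length m"
    using i length_maxchain[OF m] by auto
  obtain d where d: "d \<in> maxchains P le (m ! (i - 1)) (m ! (i + 1))" and "sorted (labels lam d)"
    using increasing_maxchain_unique[OF maxchain_in_P[OF m] maxchain_in_P[OF m] maxchain_le[OF m]] window
    by (metis le_trans)
  have "length d = 3"
    using length_interval_maxchain[OF m window(1,2) d] i by simp
  then have d_ends: "d ! 0 = m ! (i - 1)" "d ! 2 = m ! (i + 1)"
    and d_ascent: "lam (d ! 0) (d ! 1) \<le> lam (d ! 1) (d ! 2)"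
    using d \<open>sorted (labels lam d)\<close>
    by (auto simp: maxchains_def hd_conv_nth last_conv_nth labels_def sorted_iff_nth_Suc numeral_eq_Suc)
  define m' where "m' = replace_segment m (i - 1) (i + 1) d"
  have "length d = Suc (i + 1) - (i - 1)"
    using \<open>length d = 3\<close> i by simp
  note nth_m' = nth_replace_segment[OF this window(1,3), folded m'_def]
  show ?thesis
  proof
    show "m' \<in> M"
      unfolding m'_def using maxchain_replace_segment[OF m window(1,2) d] .
    show agree: "m' ! j = m ! j" if "j \<noteq> i" for j
    proof (cases "j = i - 1 \<or> j = i + 1")
      case True
      then show ?thesis
        using nth_m'[of j] d_ends i by (auto simp: numeral_2_eq_2)
    next
      case False
      then show ?thesis
        using nth_m'[of j] that by auto
    qed
    have "m' ! i = d ! 1"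
      using nth_m'[of i] i by simp
    then show "\<not> has_descent lam m' i"
      using d_ascent d_ends agree[of "i - 1"] agree[of "i + 1"] length_maxchain[OF \<open>m' \<in> M\<close>] i
      by (simp add: has_descent_def nth_labels)
  qed
qed

lemma U_op_eqI:
  assumes m: "m \<in> M" and i: "1 \<le> i" "i < n" and m': "m' \<in> M"
    and agree: "\<And>j. j \<noteq> i \<Longrightarrow> m' ! j = m ! j" and ascent: "\<not> has_descent lam m' i"
  shows "U i m = m'"
  unfolding U_op_def
proof (rule the_equality)
  show "m' \<in> M \<and> length m' = length m \<and> (\<forall>j. j \<noteq> i \<longrightarrow> m' ! j = m ! j) \<and> \<not> has_descent lam m' i"
    using m m' agree ascent length_maxchain by simp
  fix x
  assume x: "x \<in> M \<and> length x = length m \<and> (\<forall>j. j \<noteq> i \<longrightarrow> x ! j = m ! j) \<and> \<not> has_descent lam x i"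
  show "x = m'"
  proof (rule maxchains_eqI[of x m' "i - 1" "i + 1"])
    show "x \<in> M" "m' \<in> M" "i - 1 \<le> i + 1" "i + 1 \<le> n"
      using x m' i by auto
    show "x ! j = m' ! j" if "j \<le> i - 1 \<or> i + 1 \<le> j" for j
      using that x agree i by auto
    show "labels lam x ! k \<le> labels lam x ! Suc k" "labels lam m' ! k \<le> labels lam m' ! Suc k"
      if "i - 1 \<le> k" "Suc k < i + 1" for k
      using that x ascent i by (auto intro: ascent_if_no_descent)
  qed
qed

lemma U_op_properties:
  assumes m: "m \<in> M" and i: "1 \<le> i" "i < n"
  shows U_op_in_maxchains: "U i m \<in> M"
    and nth_U_op: "\<And>j. j \<noteq> i \<Longrightarrow> U i m ! j = m ! j"
    and U_op_no_descent: "\<not> has_descent lam (U i m) i"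
proof -
  obtain m' where "m' \<in> M" "\<And>j. j \<noteq> i \<Longrightarrow> m' ! j = m ! j" "\<not> has_descent lam m' i"
    using ex_maxchain_without_descent[OF m i] by blast
  moreover from this have "U i m = m'"
    by (rule U_op_eqI[OF m i])
  ultimately show "U i m \<in> M" "\<And>j. j \<noteq> i \<Longrightarrow> U i m ! j = m ! j" "\<not> has_descent lam (U i m) i"
    by simp_all
qed

lemma U_op_fixed: "m \<in> M \<Longrightarrow> 1 \<le> i \<Longrightarrow> i < n \<Longrightarrow> \<not> has_descent lam m i \<Longrightarrow> U i m = m"
  by (rule U_op_eqI) auto

lemma U_op_idem: "m \<in> M \<Longrightarrow> 1 \<le> i \<Longrightarrow> i < n \<Longrightarrow> U i (U i m) = U i m"
  by (simp add: U_op_fixed U_op_in_maxchains U_op_no_descent)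

lemma labels_U_op:
  assumes m: "m \<in> M" and i: "1 \<le> i" "i < n"
  shows "labels lam (U i m) ! (i - 1) = min (labels lam m ! (i - 1)) (labels lam m ! i)"
    and "labels lam (U i m) ! i = max (labels lam m ! (i - 1)) (labels lam m ! i)"
    and "k < n \<Longrightarrow> k \<noteq> i - 1 \<Longrightarrow> k \<noteq> i \<Longrightarrow> labels lam (U i m) ! k = labels lam m ! k"
proof -
  have lengths: "length (U i m) = Suc n" "length m = Suc n"
    using length_maxchain U_op_in_maxchains[OF m i] m by auto
  show others: "labels lam (U i m) ! k = labels lam m ! k" if "k < n" "k \<noteq> i - 1" "k \<noteq> i" for k
    using that lengths i by (intro nth_labels_cong) (auto simp: nth_U_op[OF m i])
  have "Suc (i - 1) = i"
    using i by simp
  moreover have "labels lam (U i m) ! (i - 1) \<le> labels lam (U i m) ! Suc (i - 1)"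
    using U_op_no_descent[OF m i] i by (simp add: has_descent_def)
  ultimately show "labels lam (U i m) ! (i - 1) = min (labels lam m ! (i - 1)) (labels lam m ! i)"
    "labels lam (U i m) ! i = max (labels lam m ! (i - 1)) (labels lam m ! i)"
    using adjacent_rearrangement_min_max[of "labels lam (U i m)" "labels lam m" "i - 1"]
      labels_permutation[OF m] labels_permutation[OF U_op_in_maxchains[OF m i]] lengths others i
    by auto
qed

lemma U_op_commute:
  assumes m: "m \<in> M" and i: "1 \<le> i" "i < n" and j: "1 \<le> j" "j < n" and far: "i + 2 \<le> j \<or> j + 2 \<le> i"
  shows "U i (U j m) = U j (U i m)"
proof -
  have agree_at: "U k (U l m) ! k = U l (U k m) ! k"
    if k: "1 \<le> k" "k < n" and l: "1 \<le> l" "l < n" and far: "k + 2 \<le> l \<or> l + 2 \<le> k" for k l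
  proof -
    have ml: "U l m \<in> M" and mk: "U k m \<in> M"
      using U_op_in_maxchains m k l by auto
    have X: "U k (U l m) \<in> M" and Y: "U l (U k m) \<in> M"
      using U_op_in_maxchains ml mk k l by auto
    have near_k: "U l (U k m) ! p = U k m ! p" if "k - 1 \<le> p" "p \<le> k + 1" for p
      using nth_U_op[OF mk l] that far by auto
    have "labels lam (U l (U k m)) ! p = labels lam (U k m) ! p" if "p = k - 1 \<or> p = k" for p
      using that k length_maxchain[OF Y] length_maxchain[OF mk] near_k
      by (intro nth_labels_cong) auto
    then have Y_ascent: "\<not> has_descent lam (U l (U k m)) k"
      using U_op_no_descent[OF m k] by (simp add: has_descent_def)
    show ?thesis
    proof (rule maxchains_agree_between[OF X Y])
      show "k - 1 \<le> k + 1" "k + 1 \<le> n" "k - 1 \<le> k" "k \<le> k + 1"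
        using k by auto
      show "U k (U l m) ! (k - 1) = U l (U k m) ! (k - 1)" "U k (U l m) ! (k + 1) = U l (U k m) ! (k + 1)"
        using nth_U_op ml mk m k l far by auto
      show "labels lam (U k (U l m)) ! p \<le> labels lam (U k (U l m)) ! Suc p"
        "labels lam (U l (U k m)) ! p \<le> labels lam (U l (U k m)) ! Suc p"
        if "k - 1 \<le> p" "Suc p < k + 1" for p
        using that U_op_no_descent[OF ml k] Y_ascent k by (auto intro: ascent_if_no_descent)
    qed
  qed
  show ?thesis
  proof (rule nth_equalityI)
    show "length (U i (U j m)) = length (U j (U i m))"
      using length_maxchain U_op_in_maxchains m i j by simp
    fix p
    show "U i (U j m) ! p = U j (U i m) ! p"
      using agree_at[OF i j far] agree_at[OF j i] far nth_U_op U_op_in_maxchains m i j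
      by (cases "p = i \<or> p = j") auto
  qed
qed

lemma U_op_braid:
  assumes m: "m \<in> M" and i: "1 \<le> i" "i + 2 \<le> n"
  shows "U i (U (i + 1) (U i m)) = U (i + 1) (U i (U (i + 1) m))"
proof -
  have i1: "1 \<le> i" "i < n" and i2: "1 \<le> i + 1" "i + 1 < n"
    using i by auto
  define a1 a2 b1 b2 where "a1 = U i m" and "a2 = U (i + 1) a1" and "b1 = U (i + 1) m" and "b2 = U i b1"
  have chains: "a1 \<in> M" "a2 \<in> M" "b1 \<in> M" "b2 \<in> M" "U i a2 \<in> M" "U (i + 1) b2 \<in> M"
    unfolding a1_def a2_def b1_def b2_def using U_op_in_maxchains m i1 i2 by blast+
  note labels_a2 = labels_U_op[OF chains(1) i2, folded a2_def]
  note labels_b2 = labels_U_op[OF chains(3) i1, folded b2_def]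
  have ascent_A: "labels lam (U i a2) ! i \<le> labels lam (U i a2) ! (i + 1)"
  proof -
    have "labels lam a1 ! (i - 1) \<le> labels lam a1 ! i"
      using U_op_no_descent[OF m i1, folded a1_def] i by (simp add: has_descent_def)
    moreover have "labels lam a2 ! i \<le> labels lam a2 ! (i + 1)"
      using U_op_no_descent[OF chains(1) i2, folded a2_def] by (simp add: has_descent_def)
    ultimately show ?thesis
      using labels_U_op[OF chains(2) i1] labels_a2(2) labels_a2(3)[of "i - 1"] i by (auto simp: max_def)
  qed
  have ascent_B: "labels lam (U (i + 1) b2) ! (i - 1) \<le> labels lam (U (i + 1) b2) ! i"
  proof -
    have "labels lam b1 ! i \<le> labels lam b1 ! (i + 1)"
      using U_op_no_descent[OF m i2, folded b1_def] by (simp add: has_descent_def)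
    moreover have "labels lam b2 ! (i + 1) = labels lam b1 ! (i + 1)"
      using labels_b2(3)[of "i + 1"] i by simp
    moreover have "labels lam (U (i + 1) b2) ! (i - 1) = labels lam b2 ! (i - 1)"
      using labels_U_op(3)[OF chains(4) i2, of "i - 1"] i by simp
    ultimately show ?thesis
      using labels_U_op(1)[OF chains(4) i2] labels_b2(1,2) i by (auto simp: min_def max_def)
  qed
  have "U i a2 = U (i + 1) b2"
  proof (rule maxchains_eqI[of _ _ "i - 1" "i + 2"])
    show "U i a2 \<in> M" "U (i + 1) b2 \<in> M" "i - 1 \<le> i + 2" "i + 2 \<le> n"
      using chains i by auto
    show "U i a2 ! j = U (i + 1) b2 ! j" if "j \<le> i - 1 \<or> i + 2 \<le> j" for j
      using that nth_U_op m chains i1 i2 unfolding a1_def a2_def b1_def b2_def by auto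
    show "labels lam (U i a2) ! k \<le> labels lam (U i a2) ! Suc k" if "i - 1 \<le> k" "Suc k < i + 2" for k
      using that ascent_A U_op_no_descent[OF chains(2) i1] i
      by (cases "k = i") (auto intro: ascent_if_no_descent)
    show "labels lam (U (i + 1) b2) ! k \<le> labels lam (U (i + 1) b2) ! Suc k"
      if "i - 1 \<le> k" "Suc k < i + 2" for k
      using that ascent_B U_op_no_descent[OF chains(4) i2] i
      by (cases "k = i - 1") (auto intro: ascent_if_no_descent)
  qed
  then show ?thesis
    by (simp add: a1_def a2_def b1_def b2_def)
qed

lemma descent_if_U_op_moves:
  assumes "m \<in> M" "1 \<le> i" "i < n" "U i m \<noteq> m"
  shows "labels lam m ! i < labels lam m ! (i - 1)"
  using U_op_fixed[OF assms(1-3)] assms(4) by (force simp: has_descent_def)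

lemma omega_U_op:
  assumes m: "m \<in> M" and i: "1 \<le> i" "i < n" and moves: "U i m \<noteq> m"
  shows "omega lam n (U i m) = omega lam n m \<circ> transpose i (i + 1)"
proof
  fix k
  have descent: "labels lam m ! i < labels lam m ! (i - 1)"
    using descent_if_U_op_moves[OF assms] .
  show "omega lam n (U i m) k = (omega lam n m \<circ> transpose i (i + 1)) k"
  proof (cases "k = i \<or> k = i + 1")
    case True
    then show ?thesis
      using labels_U_op(1,2)[OF m i] descent i by (auto simp: omega_def)
  next
    case False
    then show ?thesis
      using labels_U_op(3)[OF m i, of "k - 1"] by (auto simp: omega_def)
  qed
qed

lemma inversions_U_op:
  assumes m: "m \<in> M" and i: "1 \<le> i" "i < n" and moves: "U i m \<noteq> m"
  shows "inversions n (omega lam n (U i m)) + 1 = inversions n (omega lam n m)"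
proof -
  have "labels lam m ! i \<in> {1..int n}"
    using labels_permutation[OF m] length_maxchain[OF m] i by (metis length_labels diff_Suc_1 nth_mem)
  then have "omega lam n m (i + 1) < omega lam n m i"
    using descent_if_U_op_moves[OF assms] i by (simp add: omega_def)
  then show ?thesis
    using inversions_comp_transpose[of i n] omega_U_op[OF assms] i by simp
qed

abbreviation T :: "nat \<Rightarrow> ('a list \<Rightarrow> complex) \<Rightarrow> 'a list \<Rightarrow> complex" where
  "T \<equiv> T_act P le zero one lam"

lemma T_act_eq_pushforward: "T i v = - pushforward M (U i) v"
  by (simp add: T_act_def U_lin_eq_pushforward)

lemma T_act_T_act:
  assumes "1 \<le> j" "j < n"
  shows "T i (T j v) = pushforward M (U i \<circ> U j) v"
proof -
  have "T i (T j v) = pushforward M (U i) (pushforward M (U j) v)"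
    by (simp add: T_act_eq_pushforward pushforward_uminus fun_eq_iff)
  also have "\<dots> = pushforward M (U i \<circ> U j) v"
    by (rule pushforward_comp) (use finite_maxchains U_op_in_maxchains assms in auto)
  finally show ?thesis .
qed

lemma T_act_T_act_T_act:
  assumes "1 \<le> j" "j < n" "1 \<le> k" "k < n"
  shows "T i (T j (T k v)) = - pushforward M (U i \<circ> (U j \<circ> U k)) v"
proof -
  have "T i (T j (T k v)) = - pushforward M (U i) (pushforward M (U j \<circ> U k) v)"
    unfolding T_act_T_act[OF assms(3,4)] by (rule T_act_eq_pushforward)
  also have "\<dots> = - pushforward M (U i \<circ> (U j \<circ> U k)) v"
    by (subst pushforward_comp) (use finite_maxchains U_op_in_maxchains assms in auto)
  finally show ?thesis .
qed

lemma T_act_quadratic: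
  assumes "1 \<le> i" "i < n"
  shows "T i (T i v) = - T i v"
proof -
  have "T i (T i v) = pushforward M (U i \<circ> U i) v"
    using T_act_T_act assms .
  also have "\<dots> = pushforward M (U i) v"
    by (rule pushforward_cong) (use assms in \<open>simp add: U_op_idem\<close>)
  finally show ?thesis
    by (simp add: T_act_eq_pushforward fun_eq_iff)
qed

lemma T_act_commute:
  assumes "1 \<le> i" "i < n" "1 \<le> j" "j < n" "i + 2 \<le> j \<or> j + 2 \<le> i"
  shows "T i (T j v) = T j (T i v)"
proof -
  have "pushforward M (U i \<circ> U j) v = pushforward M (U j \<circ> U i) v"
    by (rule pushforward_cong) (simp add: U_op_commute[OF _ assms])
  then show ?thesis
    using assms by (simp add: T_act_T_act)
qed

lemma T_act_braid:
  assumes "1 \<le> i" "i + 2 \<le> n"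
  shows "T i (T (i + 1) (T i v)) = T (i + 1) (T i (T (i + 1) v))"
proof -
  have "pushforward M (U i \<circ> (U (i + 1) \<circ> U i)) v = pushforward M (U (i + 1) \<circ> (U i \<circ> U (i + 1))) v"
    by (rule pushforward_cong) (unfold comp_apply, rule U_op_braid[OF _ assms])
  then show ?thesis
    using assms by (simp add: T_act_T_act_T_act)
qed

end

theorem mainTheorem2:
  fixes P :: "'a set" and le :: "'a \<Rightarrow> 'a \<Rightarrow> bool" and zero one :: 'a
    and n :: nat and lam :: "'a \<Rightarrow> 'a \<Rightarrow> int"
  defines "M \<equiv> maxchains P le zero one"
    and "U \<equiv> U_op P le zero one lam"
    and "T \<equiv> T_act P le zero one lam"
  assumes graded: "bounded_graded_poset P le zero one n"
    and SnEL: "Sn_EL_labeling P le zero one n lam"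
  shows
    "(\<forall>i. 1 \<le> i \<and> i \<le> n - 1 \<longrightarrow> (\<forall>m\<in>M. U i m \<in> M \<and> U i (U i m) = U i m))
   \<and> (\<forall>i j. 1 \<le> i \<and> i \<le> n - 1 \<and> 1 \<le> j \<and> j \<le> n - 1 \<and> (i + 2 \<le> j \<or> j + 2 \<le> i) \<longrightarrow>
        (\<forall>m\<in>M. U i (U j m) = U j (U i m)))
   \<and> (\<forall>i. 1 \<le> i \<and> i + 2 \<le> n \<longrightarrow>
        (\<forall>m\<in>M. U i (U (i + 1) (U i m)) = U (i + 1) (U i (U (i + 1) m))))
   \<and> (\<forall>v. (\<forall>m. m \<notin> M \<longrightarrow> v m = 0) \<longrightarrow>
        (\<forall>i. 1 \<le> i \<and> i \<le> n - 1 \<longrightarrow> T i (T i v) = - T i v)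
      \<and> (\<forall>i j. 1 \<le> i \<and> i \<le> n - 1 \<and> 1 \<le> j \<and> j \<le> n - 1 \<and> (i + 2 \<le> j \<or> j + 2 \<le> i) \<longrightarrow>
            T i (T j v) = T j (T i v))
      \<and> (\<forall>i. 1 \<le> i \<and> i + 2 \<le> n \<longrightarrow>
            T i (T (i + 1) (T i v)) = T (i + 1) (T i (T (i + 1) v))))
   \<and> (\<forall>i. 1 \<le> i \<and> i \<le> n - 1 \<longrightarrow> (\<forall>m\<in>M. U i m \<noteq> m \<longrightarrow>
        omega lam n (U i m) = omega lam n m \<circ> transpose i (i + 1)
      \<and> inversions n (omega lam n (U i m)) + 1 = inversions n (omega lam n m)))"
proof -
  interpret Sn_EL_poset P le zero one n lam
    using graded SnEL by unfold_locales
  \<comment> \<open>The Hecke relations hold for every \<open>v\<close>, since \<open>U_lin\<close> only reads \<open>v\<close> on \<open>M\<close>.\<close>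
  show ?thesis
    unfolding M_def U_def T_def
    by (intro conjI allI impI ballI; elim conjE;
        rule U_op_in_maxchains U_op_idem U_op_commute U_op_braid T_act_quadratic T_act_commute T_act_braid
          omega_U_op inversions_U_op;
        (assumption | linarith))
qed

end
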